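(* (i) The orbits $Gs$, $s\in S$, are universally measurable subsets of $S$. (ii) If $O\in\mathcal S$, then $\beta$ is universally measurable. (iii) If $O\in\mathcal S$, then for every Borel $B\subseteq G$ the map $s\mapsto\kappa_{\beta(s),s}(B)$ is universally measurable. (iv) If $O\in\mathcal S$, then $\Delta^*$ is universally measurable.
   Context: $G$ is a locally compact second countable Hausdorff group with left Haar measure $\lambda$ and modular function $\Delta$. $(S,\mathcal S)$ is a Borel space on which $G$ acts measurably and properly: with $\mu_s$ the image of $\lambda$ under $g\mapsto gs$, there is a measurable partition $B_1,B_2,\dots$ of $S$ with $\mu_s(B_n)<\infty$ for all $s,n$. $\kappa$ is a kernel from $S\times S$ to $G$ with $\int f(gs,g)\lambda(dg)=\iint f(t,g)\kappa_{s,t}(dg)\mu_s(dt)$ for all $s$ and measurable $f\ge0$, $\kappa_{s,ht}=\kappa_{s,t}\circ\theta_h^{-1}$ ($\theta_h(g)=hg$), and $\kappa_{s,t}$ a probability measure concentrated on $\{g:gs=t\}$ for $t\in Gs$. $O$ is a system of representatives of the orbits, $\beta(s)\in O$ the representative of $Gs$, $\Delta^*(s):=\Delta(g^{-1})$ for any $g$ with $g\beta(s)=s$. Universally measurable means measurable w.r.t. the intersection of the completions of $\mathcal S$ under all finite measures. *)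

theory Defs
  imports "HOL-Probability.Probability"
begin

text \<open>The group G is the type 'g, written additively (group_add does not require
commutativity): g + h is the product gh, 0 the identity, - g the inverse.\<close>

definition lcsc_group :: "'g::{topological_group_add, second_countable_topology, t2_space} itself \<Rightarrow> bool" where
  "lcsc_group _ \<longleftrightarrow> locally_compact_space (euclidean :: 'g topology)"

text \<open>Left Haar measure: nonzero left invariant Borel measure, finite on compacts
(on an lcsc group such measures are automatically Radon).\<close>
definition left_haar :: "'g::{topological_group_add, second_countable_topology, t2_space} measure \<Rightarrow> bool" where
  "left_haar lam \<longleftrightarrow> sets lam = sets borel
     \<and> (\<forall>K. compact K \<longrightarrow> emeasure lam K < \<infinity>)
     \<and> (\<forall>U. open U \<and> U \<noteq> {} \<longrightarrow> emeasure lam U > 0)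
     \<and> (\<forall>g A. A \<in> sets borel \<longrightarrow> emeasure lam ((\<lambda>x. g + x) ` A) = emeasure lam A)"

definition modular_function :: "'g::{topological_group_add, second_countable_topology, t2_space} measure \<Rightarrow> ('g \<Rightarrow> real) \<Rightarrow> bool" where
  "modular_function lam D \<longleftrightarrow> (\<forall>g. D g > 0)
     \<and> (\<forall>g A. A \<in> sets borel \<longrightarrow> emeasure lam ((\<lambda>x. x + g) ` A) = ennreal (D g) * emeasure lam A)"

definition borel_space :: "'s measure \<Rightarrow> bool" where
  "borel_space M \<longleftrightarrow> (\<exists>(f::'s \<Rightarrow> real) B. B \<in> sets borel \<and> bij_betw f (space M) B
     \<and> f \<in> M \<rightarrow>\<^sub>M restrict_space borel B
     \<and> the_inv_into (space M) f \<in> restrict_space borel B \<rightarrow>\<^sub>M M)"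

definition measurable_action :: "('g::{topological_group_add, second_countable_topology, t2_space} \<Rightarrow> 's \<Rightarrow> 's) \<Rightarrow> 's measure \<Rightarrow> bool" where
  "measurable_action act M \<longleftrightarrow> (\<lambda>(g, s). act g s) \<in> (borel \<Otimes>\<^sub>M M) \<rightarrow>\<^sub>M M
     \<and> (\<forall>s\<in>space M. act 0 s = s)
     \<and> (\<forall>g h. \<forall>s\<in>space M. act (g + h) s = act g (act h s))"

definition orbit :: "('g \<Rightarrow> 's \<Rightarrow> 's) \<Rightarrow> 's \<Rightarrow> 's set" where
  "orbit act s = range (\<lambda>g. act g s)"

definition orbit_measure :: "'g measure \<Rightarrow> 's measure \<Rightarrow> ('g \<Rightarrow> 's \<Rightarrow> 's) \<Rightarrow> 's \<Rightarrow> 's measure" where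
  "orbit_measure lam M act s = distr lam M (\<lambda>g. act g s)"

definition proper_action :: "'g measure \<Rightarrow> 's measure \<Rightarrow> ('g \<Rightarrow> 's \<Rightarrow> 's) \<Rightarrow> bool" where
  "proper_action lam M act \<longleftrightarrow> (\<exists>B :: nat \<Rightarrow> 's set. disjoint_family B \<and> (\<Union>n. B n) = space M
     \<and> (\<forall>n. B n \<in> sets M)
     \<and> (\<forall>s\<in>space M. \<forall>n. emeasure (orbit_measure lam M act s) (B n) < \<infinity>))"

definition orbit_representatives :: "'s measure \<Rightarrow> ('g \<Rightarrow> 's \<Rightarrow> 's) \<Rightarrow> 's set \<Rightarrow> bool" where
  "orbit_representatives M act Or \<longleftrightarrow> Or \<subseteq> space M \<and> (\<forall>s\<in>space M. \<exists>!r. r \<in> Or \<and> r \<in> orbit act s)"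

definition rep :: "('g \<Rightarrow> 's \<Rightarrow> 's) \<Rightarrow> 's set \<Rightarrow> 's \<Rightarrow> 's" where
  "rep act Or s = (THE r. r \<in> Or \<and> r \<in> orbit act s)"

definition Delta_star :: "('g::group_add \<Rightarrow> real) \<Rightarrow> ('g \<Rightarrow> 's \<Rightarrow> 's) \<Rightarrow> 's set \<Rightarrow> 's \<Rightarrow> real" where
  "Delta_star D act Or s = D (- (SOME g. act g (rep act Or s) = s))"

definition univ_sets :: "'s measure \<Rightarrow> 's set set" where
  "univ_sets M = {A. \<forall>\<nu>. sets \<nu> = sets M \<and> finite_measure \<nu> \<longrightarrow> A \<in> sets (completion \<nu>)}"

definition univ_measurable :: "'s measure \<Rightarrow> 't measure \<Rightarrow> ('s \<Rightarrow> 't) \<Rightarrow> bool" where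
  "univ_measurable M N f \<longleftrightarrow> f \<in> space M \<rightarrow> space N
     \<and> (\<forall>A\<in>sets N. f -` A \<inter> space M \<in> univ_sets M)"

end

theory Submission
  imports Defs "HOL-Library.Nat_Bijection"
begin

(* Everything reduces to one fact: the projection onto S of a measurable subset of S x G is
   universally measurable. As G is locally compact and second countable, each measurable subset
   of S x G is obtained by the Souslin operation from rectangles A x K with K compact; by
   compactness, projection commutes with the Souslin operation on such schemes, and Souslin sets
   are measurable for every complete finite measure (Marczewski's envelope argument).

   The orbit G s is the projection of {(t, g). g s = t}. For O in S and a measurable X, the
   preimages of X under beta, under s |-> kappa_{beta(s),s}(B) and under Delta^* are the
   projections of {(s, g). g s in O, phi (s, g) in X} for phi (s, g) = g s, kappa_{g s, s}(B) and
   Delta(g) respectively. For Delta^* this needs Delta = 1 on stabilisers: kappa_{s,s} is a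
   probability measure invariant under left translation by the stabiliser of s, so its image
   under log Delta would be a distribution on the reals invariant under a translation by
   log Delta(h), which forces log Delta(h) = 0. *)

section \<open>The Souslin operation\<close>

definition seq_take :: "(nat \<Rightarrow> 'a) \<Rightarrow> nat \<Rightarrow> 'a list" where
  "seq_take \<sigma> n = map \<sigma> [0..<n]"

lemma seq_take_0 [simp]: "seq_take \<sigma> 0 = []"
  by (simp add: seq_take_def)

lemma seq_take_Suc: "seq_take \<sigma> (Suc n) = seq_take \<sigma> n @ [\<sigma> n]"
  by (simp add: seq_take_def)

lemma length_seq_take [simp]: "length (seq_take \<sigma> n) = n"
  by (simp add: seq_take_def)

lemma nth_seq_take [simp]: "i < n \<Longrightarrow> seq_take \<sigma> n ! i = \<sigma> i"
  by (simp add: seq_take_def)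

lemma take_seq_take: "i \<le> n \<Longrightarrow> take i (seq_take \<sigma> n) = seq_take \<sigma> i"
  by (simp add: seq_take_def take_map)

lemma seq_take_Suc_Cons: "seq_take \<sigma> (Suc n) = \<sigma> 0 # map \<sigma> [Suc 0..<Suc n]"
  unfolding seq_take_def by (subst upt_conv_Cons) auto

definition souslin_op :: "(nat list \<Rightarrow> 'a set) \<Rightarrow> 'a set" where
  "souslin_op P = (\<Union>\<sigma>. \<Inter>n. P (seq_take \<sigma> (Suc n)))"

lemma mem_souslin_op: "x \<in> souslin_op P \<longleftrightarrow> (\<exists>\<sigma>. \<forall>n. x \<in> P (seq_take \<sigma> (Suc n)))"
  by (simp add: souslin_op_def)

definition souslin :: "'a set set \<Rightarrow> 'a set set" where
  "souslin F = {souslin_op P | P. \<forall>l. P l \<in> F}"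

lemma souslinI: "(\<And>l. P l \<in> F) \<Longrightarrow> souslin_op P \<in> souslin F"
  unfolding souslin_def by blast

lemma souslin_base: "A \<in> F \<Longrightarrow> A \<in> souslin F"
  using souslinI[of "\<lambda>_. A" F] by (simp add: souslin_op_def)

lemma souslin_mono: "F \<subseteq> G \<Longrightarrow> souslin F \<subseteq> souslin G"
  unfolding souslin_def by blast

lemma souslin_family_choice:
  assumes "\<And>i::nat. A i \<in> souslin F"
  shows "\<exists>P. (\<forall>i l. P i l \<in> F) \<and> (\<forall>i. A i = souslin_op (P i))"
proof -
  have "\<forall>i. \<exists>P. (\<forall>l. P l \<in> F) \<and> A i = souslin_op P"
    using assms by (simp add: souslin_def) blast
  then show ?thesis
    by metis
qed

lemma souslin_Union:
  assumes "\<And>i::nat. A i \<in> souslin F"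
  shows "(\<Union>i. A i) \<in> souslin F"
proof -
  obtain P where P: "\<And>i l. P i l \<in> F" and A: "\<And>i. A i = souslin_op (P i)"
    using souslin_family_choice[of A F] assms by blast
  (* The first letter of a word codes the index i together with the first letter of a word for A i. *)
  define Q where "Q l = (case l of [] \<Rightarrow> P 0 [] | x # xs \<Rightarrow> P (fst (prod_decode x)) (snd (prod_decode x) # xs))"
    for l
  have Q_code: "Q (seq_take (\<sigma>(0 := prod_encode (i, \<sigma> 0))) (Suc n)) = P i (seq_take \<sigma> (Suc n))"
    for \<sigma> i n
    by (simp add: Q_def seq_take_Suc_Cons)
  have decode: "(\<exists>\<tau>. R \<tau>) \<longleftrightarrow> (\<exists>i \<sigma>. R (\<sigma>(0 := prod_encode (i, \<sigma> 0))))" for R :: "(nat \<Rightarrow> nat) \<Rightarrow> bool"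
  proof
    assume "\<exists>\<tau>. R \<tau>"
    then obtain \<tau> where "R \<tau>" ..
    moreover define \<sigma> where "\<sigma> = \<tau>(0 := snd (prod_decode (\<tau> 0)))"
    moreover have "\<tau> = \<sigma>(0 := prod_encode (fst (prod_decode (\<tau> 0)), \<sigma> 0))"
      by (simp add: \<sigma>_def)
    ultimately show "\<exists>i \<sigma>. R (\<sigma>(0 := prod_encode (i, \<sigma> 0)))"
      by metis
  qed blast
  have "x \<in> souslin_op Q \<longleftrightarrow> x \<in> (\<Union>i. A i)" for x
    using decode[of "\<lambda>\<tau>. \<forall>n. x \<in> Q (seq_take \<tau> (Suc n))"] by (simp add: mem_souslin_op Q_code A)
  then have "(\<Union>i. A i) = souslin_op Q"
    by blast
  then show ?thesis
    using P by (auto simp: Q_def split: list.split intro: souslinI)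
qed

lemma Int_closed_finite_Inter:
  assumes "\<And>a b. a \<in> F \<Longrightarrow> b \<in> F \<Longrightarrow> a \<inter> b \<in> F"
  shows "finite I \<Longrightarrow> I \<noteq> {} \<Longrightarrow> I \<subseteq> F \<Longrightarrow> \<Inter>I \<in> F"
proof (induction I rule: finite_ne_induct)
  case (insert x I)
  then show ?case using assms by auto
qed auto

lemma prod_encode_mono_right:
  assumes "j \<le> n"
  shows "prod_encode (k, j) \<le> prod_encode (k, n)"
proof -
  have "triangle (k + j) \<le> triangle (k + n)"
    by (rule lift_Suc_mono_le[of triangle]) (use assms in simp_all)
  then show ?thesis
    by (simp add: prod_encode_def)
qed

(* A single word tau codes a word sigma_k for every k by tau (prod_encode (k, j)) = sigma_k j;
   a prefix l of tau determines the letters sigma_k j with prod_encode (k, j) < length l.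
   The value at the empty word is irrelevant to souslin_op. *)
definition souslin_scheme_Inter :: "(nat \<Rightarrow> nat list \<Rightarrow> 'a set) \<Rightarrow> nat list \<Rightarrow> 'a set" where
  "souslin_scheme_Inter P l = (if l = [] then P 0 [] else
     (\<Inter>(k, n)\<in>{(k, n). prod_encode (k, n) < length l}. P k (map (\<lambda>j. l ! prod_encode (k, j)) [0..<Suc n])))"

lemma souslin_scheme_Inter_in:
  assumes Int: "\<And>a b. a \<in> F \<Longrightarrow> b \<in> F \<Longrightarrow> a \<inter> b \<in> F"
    and P: "\<And>k l. P k l \<in> F"
  shows "souslin_scheme_Inter P l \<in> F"
proof (cases "l = []")
  case False
  have "{(k, n). prod_encode (k, n) < length l} \<subseteq> {..<length l} \<times> {..<length l}"
    by (auto intro: le_less_trans[OF le_prod_encode_1] le_less_trans[OF le_prod_encode_2])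
  then have "finite {(k, n). prod_encode (k, n) < length l}"
    by (rule finite_subset) simp
  moreover have "(0, 0) \<in> {(k, n). prod_encode (k, n) < length l}"
    using False by (simp add: prod_encode_def)
  ultimately show ?thesis
    using False P by (auto simp: souslin_scheme_Inter_def intro!: Int_closed_finite_Inter[OF Int])
qed (simp add: souslin_scheme_Inter_def P)

lemma souslin_scheme_Inter_seq_take:
  "souslin_scheme_Inter P (seq_take \<tau> (Suc N))
    = (\<Inter>(k, n)\<in>{(k, n). prod_encode (k, n) < Suc N}. P k (seq_take (\<lambda>j. \<tau> (prod_encode (k, j))) (Suc n)))"
proof -
  have "map (\<lambda>j. seq_take \<tau> (Suc N) ! prod_encode (k, j)) [0..<Suc n]
      = seq_take (\<lambda>j. \<tau> (prod_encode (k, j))) (Suc n)"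
    if "prod_encode (k, n) < Suc N" for k n
  proof -
    have "prod_encode (k, j) < Suc N" if "j < Suc n" for j
      using that \<open>prod_encode (k, n) < Suc N\<close> prod_encode_mono_right[of j n k] by simp
    then show ?thesis
      by (auto simp: seq_take_def[of "\<lambda>j. \<tau> (prod_encode (k, j))"] intro!: map_cong)
  qed
  moreover have "seq_take \<tau> (Suc N) \<noteq> []"
    by (simp add: seq_take_Suc)
  ultimately show ?thesis
    unfolding souslin_scheme_Inter_def by (auto intro!: INF_cong)
qed

lemma souslin_op_scheme_Inter: "souslin_op (souslin_scheme_Inter P) = (\<Inter>k. souslin_op (P k))"
proof -
  have decide_prefix: "x \<in> souslin_op (souslin_scheme_Inter P)
      \<longleftrightarrow> (\<exists>\<tau>. \<forall>k n. x \<in> P k (seq_take (\<lambda>j. \<tau> (prod_encode (k, j))) (Suc n)))" for x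
  proof -
    have "(\<forall>N. x \<in> souslin_scheme_Inter P (seq_take \<tau> (Suc N)))
        \<longleftrightarrow> (\<forall>k n. x \<in> P k (seq_take (\<lambda>j. \<tau> (prod_encode (k, j))) (Suc n)))" for \<tau>
      unfolding souslin_scheme_Inter_seq_take by fastforce
    then show ?thesis
      by (simp add: mem_souslin_op)
  qed
  have decode: "(\<exists>\<tau>. \<forall>k n. x \<in> P k (seq_take (\<lambda>j. \<tau> (prod_encode (k, j))) (Suc n)))
      \<longleftrightarrow> (\<exists>\<sigma>. \<forall>k n. x \<in> P k (seq_take (\<sigma> k) (Suc n)))" for x
  proof
    assume "\<exists>\<sigma>. \<forall>k n. x \<in> P k (seq_take (\<sigma> k) (Suc n))"
    then obtain \<sigma> where "\<forall>k n. x \<in> P k (seq_take (\<sigma> k) (Suc n))" ..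
    then show "\<exists>\<tau>. \<forall>k n. x \<in> P k (seq_take (\<lambda>j. \<tau> (prod_encode (k, j))) (Suc n))"
      by (intro exI[of _ "\<lambda>m. case_prod \<sigma> (prod_decode m)"]) simp
  next
    assume "\<exists>\<tau>. \<forall>k n. x \<in> P k (seq_take (\<lambda>j. \<tau> (prod_encode (k, j))) (Suc n))"
    then obtain \<tau> where "\<forall>k n. x \<in> P k (seq_take (\<lambda>j. \<tau> (prod_encode (k, j))) (Suc n))" ..
    then show "\<exists>\<sigma>. \<forall>k n. x \<in> P k (seq_take (\<sigma> k) (Suc n))"
      by (rule exI[of _ "\<lambda>k j. \<tau> (prod_encode (k, j))"])
  qed
  have "x \<in> souslin_op (souslin_scheme_Inter P) \<longleftrightarrow> x \<in> (\<Inter>k. souslin_op (P k))" for x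
    unfolding decide_prefix decode by (simp add: mem_souslin_op choice_iff)
  then show ?thesis
    by blast
qed

lemma souslin_Inter:
  assumes Int: "\<And>a b. a \<in> F \<Longrightarrow> b \<in> F \<Longrightarrow> a \<inter> b \<in> F"
    and "\<And>i::nat. A i \<in> souslin F"
  shows "(\<Inter>i. A i) \<in> souslin F"
proof -
  obtain P where P: "\<And>i l. P i l \<in> F" and A: "\<And>i. A i = souslin_op (P i)"
    using souslin_family_choice[of A F] assms(2) by blast
  then have "(\<Inter>i. A i) = souslin_op (souslin_scheme_Inter P)"
    by (simp add: souslin_op_scheme_Inter)
  then show ?thesis
    using souslin_scheme_Inter_in[OF Int P] by (simp add: souslinI)
qed

definition souslin_op_from :: "(nat list \<Rightarrow> 'a set) \<Rightarrow> nat list \<Rightarrow> 'a set" where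
  "souslin_op_from P s = (\<Union>\<sigma>\<in>{\<sigma>. seq_take \<sigma> (length s) = s}. \<Inter>n. P (seq_take \<sigma> (Suc n)))"

lemma souslin_op_from_Nil: "souslin_op_from P [] = souslin_op P"
  by (simp add: souslin_op_from_def souslin_op_def)

lemma souslin_op_from_split: "souslin_op_from P s = (\<Union>k. souslin_op_from P (s @ [k]))"
proof safe
  fix x assume "x \<in> souslin_op_from P s"
  then obtain \<sigma> where "seq_take \<sigma> (length s) = s" "\<forall>n. x \<in> P (seq_take \<sigma> (Suc n))"
    by (auto simp: souslin_op_from_def)
  then show "x \<in> (\<Union>k. souslin_op_from P (s @ [k]))"
    by (auto simp: souslin_op_from_def seq_take_Suc intro!: exI[of _ "\<sigma> (length s)"])
next
  fix x k assume "x \<in> souslin_op_from P (s @ [k])"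
  then show "x \<in> souslin_op_from P s"
    by (auto simp: souslin_op_from_def seq_take_Suc)
qed

lemma souslin_op_from_subset:
  assumes "s \<noteq> []"
  shows "souslin_op_from P s \<subseteq> P s"
proof
  fix x assume "x \<in> souslin_op_from P s"
  then obtain \<sigma> where "seq_take \<sigma> (length s) = s" "\<And>n. x \<in> P (seq_take \<sigma> (Suc n))"
    by (auto simp: souslin_op_from_def)
  moreover have "Suc (length s - 1) = length s"
    using assms by simp
  ultimately show "x \<in> P s"
    by metis
qed

lemma souslin_op_branching:
  assumes "\<And>s. s \<noteq> [] \<Longrightarrow> H s \<subseteq> P s"
  shows "H [] - (\<Union>s. H s - (\<Union>k. H (s @ [k]))) \<subseteq> souslin_op P"
proof
  fix x assume x: "x \<in> H [] - (\<Union>s. H s - (\<Union>k. H (s @ [k])))"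
  define next_letter where "next_letter s = (SOME k. x \<in> H (s @ [k]))" for s
  have next_letter: "x \<in> H (s @ [next_letter s])" if "x \<in> H s" for s
  proof -
    have "\<exists>k. x \<in> H (s @ [k])"
      using that x by blast
    then show ?thesis
      unfolding next_letter_def by (rule someI_ex)
  qed
  define \<sigma> where "\<sigma> n = next_letter (rec_nat [] (\<lambda>_ s. s @ [next_letter s]) n)" for n
  have "seq_take \<sigma> n = rec_nat [] (\<lambda>_ s. s @ [next_letter s]) n" for n
    by (induction n) (simp_all add: seq_take_Suc \<sigma>_def)
  then have seq_take_\<sigma>: "seq_take \<sigma> (Suc n) = seq_take \<sigma> n @ [next_letter (seq_take \<sigma> n)]" for n
    by (simp add: seq_take_Suc \<sigma>_def)
  have "x \<in> H (seq_take \<sigma> n)" for n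
  proof (induction n)
    case 0
    then show ?case using x by simp
  next
    case (Suc n)
    then show ?case unfolding seq_take_\<sigma> by (rule next_letter)
  qed
  moreover have "seq_take \<sigma> (Suc n) \<noteq> []" for n
    by (simp add: seq_take_Suc)
  ultimately show "x \<in> souslin_op P"
    using assms unfolding mem_souslin_op by blast
qed

lemma souslin_sets_subset_complete:
  assumes finite: "emeasure N (space N) < \<infinity>"
    and complete: "\<And>A B. A \<subseteq> B \<Longrightarrow> B \<in> null_sets N \<Longrightarrow> A \<in> sets N"
  shows "souslin (sets N) \<subseteq> sets N"
proof
  fix A assume "A \<in> souslin (sets N)"
  then obtain P where P: "\<And>l. P l \<in> sets N" and A: "A = souslin_op P"
    unfolding souslin_def by blast
  have "souslin_op_from P (s @ [k]) \<subseteq> space N" for s k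
    using souslin_op_from_subset[of "s @ [k]" P] sets.sets_into_space[OF P] by blast
  then have "souslin_op_from P s \<subseteq> space N" for s
    by (subst souslin_op_from_split) blast
  then have "\<exists>E. measurable_envelope N (souslin_op_from P s) E" for s
    using measurable_envelopeI_countable_cover[of _ "\<lambda>_. space N" N] finite by blast
  then obtain E where E: "\<And>s. measurable_envelope N (souslin_op_from P s) (E s)"
    by metis
  (* Marczewski's argument: intersected with P s, the envelopes still contain the pieces of A,
     and the points where they fail to branch form a null set. *)
  define H where "H s = (if s = [] then E s else E s \<inter> P s)" for s
  have H_sets: "H s \<in> sets N" for s
    using measurable_envelopeD(2)[OF E] P by (auto simp: H_def)
  have H_sup: "souslin_op_from P s \<subseteq> H s" for s
    using measurable_envelopeD(1)[OF E] souslin_op_from_subset[of s P] by (auto simp: H_def)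
  have "H s - (\<Union>k. H (s @ [k])) \<in> null_sets N" for s
  proof -
    have "souslin_op_from P s \<subseteq> (\<Union>k. H (s @ [k]))"
      using H_sup by (subst souslin_op_from_split) blast
    then have "H s - (\<Union>k. H (s @ [k])) \<subseteq> E s - souslin_op_from P s"
      by (auto simp: H_def)
    then show ?thesis
      using measurable_envelopeD1[OF E] H_sets by (auto simp: null_sets_def)
  qed
  then have null: "(\<Union>s. H s - (\<Union>k. H (s @ [k]))) \<in> null_sets N"
    by (intro null_sets_UN') auto
  have "H [] - A \<subseteq> (\<Union>s. H s - (\<Union>k. H (s @ [k])))"
    using souslin_op_branching[of H P] by (auto simp: A H_def)
  then have "H [] - A \<in> sets N"
    using complete null by blast
  moreover have "A = H [] - (H [] - A)"
    using H_sup[of "[]"] by (auto simp: A souslin_op_from_Nil)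
  ultimately show "A \<in> sets N"
    using H_sets by (metis sets.Diff)
qed

lemma souslin_subset_univ_sets: "souslin (sets M) \<subseteq> univ_sets M"
proof (clarsimp simp: univ_sets_def)
  fix A \<nu> assume A: "A \<in> souslin (sets M)" and \<nu>: "sets \<nu> = sets M" "finite_measure \<nu>"
  have "souslin (sets M) \<subseteq> souslin (sets (completion \<nu>))"
    using \<nu>(1) by (intro souslin_mono) auto
  also have "\<dots> \<subseteq> sets (completion \<nu>)"
    using finite_measure.emeasure_finite[OF \<nu>(2), of "space \<nu>"]
    by (intro souslin_sets_subset_complete) (auto simp: top.not_eq_extremum intro: completion.complete)
  finally show "A \<in> sets (completion \<nu>)"
    using A by blast
qed

section \<open>Projections of measurable subsets of S \<times> G\<close>

lemma Hausdorff_space_euclidean_t2: "Hausdorff_space (euclidean :: 'a::t2_space topology)"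
  unfolding Hausdorff_space_def disjnt_def by (metis hausdorff open_openin)

lemma locally_compact_open_Union_compact:
  fixes U :: "'g::{t2_space, second_countable_topology} set"
  assumes lc: "locally_compact_space (euclidean :: 'g topology)"
    and U: "open U"
  obtains L :: "nat \<Rightarrow> 'g set" where "\<And>n. compact (L n)" "U = (\<Union>n. L n)"
proof -
  have nb: "neighbourhood_base_of (compactin euclidean) (euclidean :: 'g topology)"
    using locally_compact_imp_neighbourhood_base[OF lc
        locally_compact_Hausdorff_imp_regular_space[OF lc Hausdorff_space_euclidean_t2]] .
  obtain \<B> :: "'g set set" where B: "countable \<B>" "\<And>S. open S \<Longrightarrow> \<exists>U. U \<subseteq> \<B> \<and> S = \<Union>U"
    by (rule univ_second_countable) blast
  define BU where "BU = {b\<in>\<B>. \<exists>C. compact C \<and> b \<subseteq> C \<and> C \<subseteq> U}"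
  have "\<forall>b\<in>BU. \<exists>C. compact C \<and> b \<subseteq> C \<and> C \<subseteq> U"
    by (auto simp: BU_def)
  then obtain C where C: "\<And>b. b \<in> BU \<Longrightarrow> compact (C b) \<and> b \<subseteq> C b \<and> C b \<subseteq> U"
    by metis
  have "U = (\<Union>b\<in>BU. C b)"
  proof safe
    fix x assume "x \<in> U"
    then obtain V K where VK: "open V" "compact K" "x \<in> V" "V \<subseteq> K" "K \<subseteq> U"
      using nb U unfolding neighbourhood_base_of by (metis compactin_euclidean_iff open_openin)
    obtain W where "W \<subseteq> \<B>" "V = \<Union>W"
      using B(2)[OF \<open>open V\<close>] by blast
    with VK obtain b where "b \<in> BU" "x \<in> b"
      by (auto simp: BU_def)
    with C show "x \<in> (\<Union>b\<in>BU. C b)"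
      by blast
  qed (use C in blast)
  moreover have "countable BU"
    using B(1) by (auto simp: BU_def)
  ultimately show ?thesis
  proof (cases "BU = {}")
    case False
    show ?thesis
    proof (rule that[of "\<lambda>n. C (from_nat_into BU n)"])
      show "compact (C (from_nat_into BU n))" for n
        using C from_nat_into[OF False] by blast
      show "U = (\<Union>n. C (from_nat_into BU n))"
        using \<open>U = (\<Union>b\<in>BU. C b)\<close> range_from_nat_into[OF False \<open>countable BU\<close>]
        by (metis image_image)
    qed
  qed (use that[of "\<lambda>_. {}"] in auto)
qed

lemma locally_compact_closed_Union_compact:
  fixes V :: "'g::{t2_space, second_countable_topology} set"
  assumes lc: "locally_compact_space (euclidean :: 'g topology)"
    and V: "closed V"
  obtains L :: "nat \<Rightarrow> 'g set" where "\<And>n. compact (L n)" "V = (\<Union>n. L n)"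
proof -
  obtain K :: "nat \<Rightarrow> 'g set" where K: "\<And>n. compact (K n)" "UNIV = (\<Union>n. K n)"
    using locally_compact_open_Union_compact[OF lc open_UNIV] by blast
  show ?thesis
  proof (rule that[of "\<lambda>n. K n \<inter> V"])
    show "compact (K n \<inter> V)" for n
      using K(1) V by (rule compact_Int_closed)
    show "V = (\<Union>n. K n \<inter> V)"
      using K(2) by blast
  qed
qed

lemma compact_Inter_nonempty_iff:
  fixes K :: "nat \<Rightarrow> 'a::t2_space set"
  assumes "\<And>n. compact (K n)"
  shows "(\<Inter>n. K n) \<noteq> {} \<longleftrightarrow> (\<forall>n. (\<Inter>i\<le>n. K i) \<noteq> {})"
proof
  assume fin: "\<forall>n. (\<Inter>i\<le>n. K i) \<noteq> {}"
  have "K 0 \<inter> (\<Inter>n. K n) \<noteq> {}"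
  proof (rule compact_imp_fip_image[OF assms])
    show "closed (K n)" for n
      by (rule compact_imp_closed[OF assms])
    fix I :: "nat set" assume "finite I"
    then obtain N where "\<forall>n\<in>I. n \<le> N"
      using finite_nat_set_iff_bounded_le by auto
    then have "(\<Inter>i\<le>N. K i) \<subseteq> K 0 \<inter> (\<Inter>n\<in>I. K n)"
      by auto
    moreover have "(\<Inter>i\<le>N. K i) \<noteq> {}"
      using fin by simp
    ultimately show "K 0 \<inter> (\<Inter>n\<in>I. K n) \<noteq> {}"
      by (metis subset_empty)
  qed
  then show "(\<Inter>n. K n) \<noteq> {}"
    by auto
next
  assume "(\<Inter>n. K n) \<noteq> {}"
  then show "\<forall>n. (\<Inter>i\<le>n. K i) \<noteq> {}"
    by auto
qed

definition compact_rectangles :: "'a measure \<Rightarrow> ('a \<times> 'g::topological_space) set set" where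
  "compact_rectangles M = {a \<times> K | a K. a \<in> sets M \<and> compact K}"

lemma compact_rectangles_Int:
  fixes x y :: "('a \<times> 'g::t2_space) set"
  assumes "x \<in> compact_rectangles M" "y \<in> compact_rectangles M"
  shows "x \<inter> y \<in> compact_rectangles M"
proof -
  obtain a K a' K' where "x = a \<times> K" "y = a' \<times> K'" "a \<in> sets M" "a' \<in> sets M" "compact K" "compact K'"
    using assms unfolding compact_rectangles_def by blast
  then have "x \<inter> y = (a \<inter> a') \<times> (K \<inter> K')" "a \<inter> a' \<in> sets M" "compact (K \<inter> K')"
    by (auto simp: Times_Int_Times)
  then show ?thesis
    unfolding compact_rectangles_def by blast
qed

lemma souslin_compact_rectangles_fst_image:
  assumes "E \<in> souslin (compact_rectangles M :: ('a \<times> 'g::t2_space) set set)"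
  shows "fst ` E \<in> souslin (sets M)"
proof -
  obtain P where P: "\<And>l. P l \<in> compact_rectangles M" and E: "E = souslin_op P"
    using assms unfolding souslin_def by blast
  have "\<forall>l. \<exists>aK. P l = fst aK \<times> snd aK \<and> fst aK \<in> sets M \<and> compact (snd aK)"
    using P unfolding compact_rectangles_def by fastforce
  then obtain aK where aK: "\<And>l. P l = fst (aK l) \<times> snd (aK l)" "\<And>l. fst (aK l) \<in> sets M"
    "\<And>l. compact (snd (aK l))"
    by metis
  define a where "a l = fst (aK l)" for l
  define K where "K l = snd (aK l)" for l
  (* Along a branch the compact factors have a common point iff all their finite
     intersections are nonempty, and this can be read off the prefixes. *)
  define Q where "Q l = (if (\<Inter>i<length l. K (take (Suc i) l)) = {} then {} else a l)" for l
  have mem_Q: "x \<in> Q (seq_take \<sigma> (Suc n))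
      \<longleftrightarrow> (\<Inter>i\<le>n. K (seq_take \<sigma> (Suc i))) \<noteq> {} \<and> x \<in> a (seq_take \<sigma> (Suc n))" for x \<sigma> n
  proof -
    have "(\<Inter>i<Suc n. K (take (Suc i) (seq_take \<sigma> (Suc n)))) = (\<Inter>i\<le>n. K (seq_take \<sigma> (Suc i)))"
      by (simp add: take_seq_take lessThan_Suc_atMost)
    then show ?thesis
      by (simp add: Q_def)
  qed
  have branch_nonempty: "(\<Inter>n. K (seq_take \<sigma> (Suc n))) \<noteq> {} \<longleftrightarrow> (\<forall>n. (\<Inter>i\<le>n. K (seq_take \<sigma> (Suc i))) \<noteq> {})"
    for \<sigma>
    by (rule compact_Inter_nonempty_iff) (simp add: K_def aK(3))
  have "x \<in> fst ` E \<longleftrightarrow> x \<in> souslin_op Q" for x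
  proof -
    have "x \<in> fst ` E \<longleftrightarrow> (\<exists>y. (x, y) \<in> E)"
      by force
    also have "\<dots> \<longleftrightarrow> (\<exists>\<sigma> y. \<forall>n. x \<in> a (seq_take \<sigma> (Suc n)) \<and> y \<in> K (seq_take \<sigma> (Suc n)))"
      unfolding E mem_souslin_op a_def K_def aK(1) by auto
    also have "\<dots> \<longleftrightarrow> (\<exists>\<sigma>. (\<forall>n. x \<in> a (seq_take \<sigma> (Suc n))) \<and> (\<Inter>n. K (seq_take \<sigma> (Suc n))) \<noteq> {})"
      unfolding all_conj_distrib ex_in_conv[symmetric] by blast
    also have "\<dots> \<longleftrightarrow> x \<in> souslin_op Q"
      unfolding branch_nonempty mem_souslin_op mem_Q by auto
    finally show ?thesis .
  qed
  then have "fst ` E = souslin_op Q"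
    by blast
  moreover have "Q l \<in> sets M" for l
    using aK(2) by (simp add: Q_def a_def)
  ultimately show ?thesis
    by (auto intro: souslinI)
qed

lemma sigma_algebra_souslin_complemented:
  assumes Int: "\<And>a b. a \<in> F \<Longrightarrow> b \<in> F \<Longrightarrow> a \<inter> b \<in> F"
    and "\<Omega> \<in> souslin F" "{} \<in> souslin F"
  shows "sigma_algebra \<Omega> {C. C \<subseteq> \<Omega> \<and> C \<in> souslin F \<and> \<Omega> - C \<in> souslin F}"
  unfolding sigma_algebra_iff2
proof (intro conjI allI ballI impI)
  show "{} \<in> {C. C \<subseteq> \<Omega> \<and> C \<in> souslin F \<and> \<Omega> - C \<in> souslin F}"
    using assms(2,3) by simp
next
  fix C assume "C \<in> {C. C \<subseteq> \<Omega> \<and> C \<in> souslin F \<and> \<Omega> - C \<in> souslin F}"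
  moreover have "C \<subseteq> \<Omega> \<Longrightarrow> \<Omega> - (\<Omega> - C) = C"
    by auto
  ultimately show "\<Omega> - C \<in> {C. C \<subseteq> \<Omega> \<and> C \<in> souslin F \<and> \<Omega> - C \<in> souslin F}"
    by auto
next
  fix A :: "nat \<Rightarrow> _" assume "range A \<subseteq> {C. C \<subseteq> \<Omega> \<and> C \<in> souslin F \<and> \<Omega> - C \<in> souslin F}"
  then have A: "\<And>i. A i \<subseteq> \<Omega>" "\<And>i. A i \<in> souslin F" "\<And>i. \<Omega> - A i \<in> souslin F"
    by auto
  have "\<Omega> - (\<Union>i. A i) = (\<Inter>i. \<Omega> - A i)"
    by auto
  then show "(\<Union>i. A i) \<in> {C. C \<subseteq> \<Omega> \<and> C \<in> souslin F \<and> \<Omega> - C \<in> souslin F}"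
    using A souslin_Union[of A] souslin_Inter[OF Int, of "\<lambda>i. \<Omega> - A i"] by auto
qed auto

lemma sigma_sets_subset_souslin:
  assumes Int: "\<And>a b. a \<in> F \<Longrightarrow> b \<in> F \<Longrightarrow> a \<inter> b \<in> F"
    and "\<Omega> \<in> souslin F" "{} \<in> souslin F"
    and "\<And>C. C \<in> G \<Longrightarrow> C \<subseteq> \<Omega> \<and> C \<in> souslin F \<and> \<Omega> - C \<in> souslin F"
  shows "sigma_sets \<Omega> G \<subseteq> souslin F"
proof -
  interpret sigma_algebra \<Omega> "{C. C \<subseteq> \<Omega> \<and> C \<in> souslin F \<and> \<Omega> - C \<in> souslin F}"
    by (rule sigma_algebra_souslin_complemented[OF assms(1-3)])
  have "sigma_sets \<Omega> G \<subseteq> {C. C \<subseteq> \<Omega> \<and> C \<in> souslin F \<and> \<Omega> - C \<in> souslin F}"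
    using assms(4) by (intro sigma_sets_subset) blast
  then show ?thesis
    by blast
qed

lemma souslin_Un: "A \<in> souslin F \<Longrightarrow> B \<in> souslin F \<Longrightarrow> A \<union> B \<in> souslin F"
  unfolding Un_range_binary by (intro souslin_Union) (simp add: binary_def)

lemma Times_Union_compact_in_souslin:
  fixes L :: "nat \<Rightarrow> 'g::topological_space set"
  assumes "a \<in> sets M" "\<And>n. compact (L n)"
  shows "a \<times> (\<Union>n. L n) \<in> souslin (compact_rectangles M)"
proof -
  have "a \<times> L n \<in> souslin (compact_rectangles M)" for n
    using assms by (intro souslin_base) (auto simp: compact_rectangles_def)
  then have "(\<Union>n. a \<times> L n) \<in> souslin (compact_rectangles M)"
    by (rule souslin_Union)
  moreover have "a \<times> (\<Union>n. L n) = (\<Union>n. a \<times> L n)"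
    by auto
  ultimately show ?thesis
    by simp
qed

lemma sets_pair_borel_subset_souslin:
  fixes M :: "'a measure"
  assumes lc: "locally_compact_space (euclidean :: 'g::{t2_space, second_countable_topology} topology)"
  shows "sets (M \<Otimes>\<^sub>M (borel :: 'g measure)) \<subseteq> souslin (compact_rectangles M)"
proof -
  define \<Omega> where "\<Omega> = space M \<times> (UNIV :: 'g set)"
  have rect: "a \<times> U \<in> souslin (compact_rectangles M)" if a: "a \<in> sets M" and U: "open U \<or> closed U"
    for a and U :: "'g set"
  proof -
    from U obtain L :: "nat \<Rightarrow> 'g set" where "\<And>n. compact (L n)" "U = (\<Union>n. L n)"
    proof
      assume "open U"
      then show thesis
        using locally_compact_open_Union_compact[OF lc] that by blast
    next
      assume "closed U"
      then show thesis
        using locally_compact_closed_Union_compact[OF lc] that by blast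
    qed
    then show ?thesis
      using Times_Union_compact_in_souslin[OF a, of L] by simp
  qed
  have "sets (M \<Otimes>\<^sub>M (borel :: 'g measure))
      = sets (sigma (space M \<times> space borel) {a \<times> U | a U. a \<in> sets M \<and> U \<in> {S. open S}})"
    by (rule sets_pair_eq[of _ _ "{space M}" _ _ "{UNIV}"])
      (auto simp: sets.space_closed sets.sigma_sets_eq sets_borel)
  also have "\<dots> = sigma_sets \<Omega> {a \<times> U | a U. a \<in> sets M \<and> open U}"
    using sets.sets_into_space by (subst sets_measure_of) (auto simp: \<Omega>_def)
  also have "\<dots> \<subseteq> souslin (compact_rectangles M)"
  proof (rule sigma_sets_subset_souslin)
    show "\<Omega> \<in> souslin (compact_rectangles M)" "{} \<in> souslin (compact_rectangles M :: ('a \<times> 'g) set set)"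
      using rect[of "space M" UNIV] rect[of "{}" "{}"] by (simp_all add: \<Omega>_def)
    fix C :: "('a \<times> 'g) set" assume "C \<in> {a \<times> U | a U. a \<in> sets M \<and> open U}"
    then obtain a U where C: "C = a \<times> U" "a \<in> sets M" "open U"
      by blast
    have "\<Omega> - C = (space M - a) \<times> UNIV \<union> space M \<times> (- U)"
      by (auto simp: \<Omega>_def C(1))
    then show "C \<subseteq> \<Omega> \<and> C \<in> souslin (compact_rectangles M) \<and> \<Omega> - C \<in> souslin (compact_rectangles M)"
      using C sets.sets_into_space[OF C(2)]
      by (auto simp: \<Omega>_def closed_Compl intro!: souslin_Un rect)
  qed (rule compact_rectangles_Int)
  finally show ?thesis .
qed

lemma fst_image_univ_sets:
  fixes M :: "'a measure"
  assumes "locally_compact_space (euclidean :: 'g::{t2_space, second_countable_topology} topology)"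
    and "T \<in> sets (M \<Otimes>\<^sub>M (borel :: 'g measure))"
  shows "fst ` T \<in> univ_sets M"
  using souslin_compact_rectangles_fst_image sets_pair_borel_subset_souslin[OF assms(1)] assms(2)
    souslin_subset_univ_sets by blast

lemma univ_sets_Collect_ex:
  fixes M :: "'a measure" and R :: "'a \<Rightarrow> 'g::{t2_space, second_countable_topology} \<Rightarrow> bool"
  assumes "locally_compact_space (euclidean :: 'g topology)"
    and "{x \<in> space (M \<Otimes>\<^sub>M borel). R (fst x) (snd x)} \<in> sets (M \<Otimes>\<^sub>M borel)"
  shows "{s \<in> space M. \<exists>g. R s g} \<in> univ_sets M"
proof -
  have "{s \<in> space M. \<exists>g. R s g} = fst ` {x \<in> space (M \<Otimes>\<^sub>M borel). R (fst x) (snd x)}"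
    by (force simp: space_pair_measure)
  then show ?thesis
    using fst_image_univ_sets[OF assms] by simp
qed

section \<open>The modular function\<close>

lemma (in real_distribution) cdf_translation_invariant_imp_zero:
  assumes invariant: "\<And>t. cdf M (t + c) = cdf M t"
  shows "c = 0"
proof (rule ccontr)
  assume "c \<noteq> 0"
  define e where "e = - \<bar>c\<bar>"
  have "e < 0"
    using \<open>c \<noteq> 0\<close> by (simp add: e_def)
  have shift_e: "cdf M (t + e) = cdf M t" for t
    using invariant[of t] invariant[of "t - c"] by (cases "c \<ge> 0") (simp_all add: e_def)
  have shift_n: "cdf M (t + e * real n) = cdf M t" for t n
  proof (induction n)
    case (Suc n)
    then show ?case
      using shift_e[of "t + e * real n"] by (simp add: distrib_left ac_simps)
  qed simp
  have cdf_0: "cdf M t = 0" for t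
  proof -
    have "LIM n sequentially. e * real n :> at_bot"
      by (rule filterlim_tendsto_neg_mult_at_bot[OF tendsto_const \<open>e < 0\<close> filterlim_real_sequentially])
    then have "LIM n sequentially. t + e * real n :> at_bot"
      by (simp add: filterlim_tendsto_add_at_bot_iff[OF tendsto_const])
    from filterlim_compose[OF cdf_lim_at_bot this] show ?thesis
      by (simp add: shift_n LIMSEQ_const_iff)
  qed
  show False
    using cdf_lim_at_top_prob by (simp add: cdf_0 [abs_def] tendsto_const_iff)
qed

lemma multiplicative_eq_1_if_translation_invariant:
  fixes \<mu> :: "'g::topological_group_add measure" and D :: "'g \<Rightarrow> real"
  assumes "prob_space \<mu>" and sets_\<mu>: "sets \<mu> = sets borel"
    and invariant: "distr \<mu> borel (\<lambda>g. h + g) = \<mu>"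
    and D_meas: "D \<in> borel_measurable borel"
    and D_pos: "\<And>g. D g > 0" and D_add: "\<And>a b. D (a + b) = D a * D b"
  shows "D h = 1"
proof -
  (* The image of \<mu> under ln \<circ> D is a distribution on the reals invariant under translation by ln (D h). *)
  interpret prob_space \<mu>
    by fact
  have space_\<mu>: "space \<mu> = UNIV"
    using sets_eq_imp_space_eq[OF sets_\<mu>] by simp
  have lnD: "(\<lambda>g. ln (D g)) \<in> borel_measurable \<mu>"
    using D_meas by (simp add: measurable_cong_sets[OF sets_\<mu> refl])
  have translation: "(\<lambda>g. h + g) \<in> \<mu> \<rightarrow>\<^sub>M borel"
    by (simp add: measurable_cong_sets[OF sets_\<mu> refl] borel_measurable_continuous_onI continuous_intros)
  define Q where "Q = distr \<mu> borel (\<lambda>g. ln (D g))"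
  interpret Q: real_distribution Q
    unfolding Q_def using lnD by simp
  have cdf_Q: "cdf Q t = measure \<mu> {g. ln (D g) \<le> t}" for t
    unfolding cdf_def Q_def using lnD by (subst measure_distr) (auto simp: space_\<mu> vimage_def atMost_def)
  have "cdf Q (t + ln (D h)) = cdf Q t" for t
  proof -
    have "{g. ln (D g) \<le> t + ln (D h)} \<in> sets borel"
      using D_meas by measurable
    then have "measure \<mu> {g. ln (D g) \<le> t + ln (D h)} = measure \<mu> {g. ln (D (h + g)) \<le> t + ln (D h)}"
      by (subst (1) invariant[symmetric], subst measure_distr[OF translation])
        (auto simp: space_\<mu> vimage_def)
    also have "\<dots> = measure \<mu> {g. ln (D g) \<le> t}"
      using D_pos by (simp add: D_add ln_mult less_imp_neq[symmetric])
    finally show ?thesis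
      by (simp add: cdf_Q)
  qed
  then have "ln (D h) = 0"
    by (rule Q.cdf_translation_invariant_imp_zero)
  then show ?thesis
    using D_pos[of h] by simp
qed

lemma image_add_right_eq_vimage: "(\<lambda>x. x + a) ` A = (\<lambda>x. x + - a) -` (A :: 'g::group_add set)"
proof (intro set_eqI iffI)
  fix x assume "x \<in> (\<lambda>x. x + - a) -` A"
  then show "x \<in> (\<lambda>x. x + a) ` A"
    by (intro rev_image_eqI[of "x + - a"]) (simp_all add: add.assoc)
qed (auto simp: add.assoc)

lemma sets_borel_image_add_right:
  fixes A :: "'g::topological_group_add set"
  assumes "A \<in> sets borel"
  shows "(\<lambda>x. x + a) ` A \<in> sets borel"
  unfolding image_add_right_eq_vimage
  by (rule measurable_sets_borel[OF _ assms]) (simp add: borel_measurable_continuous_onI continuous_intros)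

lemma left_haar_obtain_positive_finite:
  fixes lam :: "'g::{topological_group_add, second_countable_topology, t2_space} measure"
  assumes lc: "locally_compact_space (euclidean :: 'g topology)" and haar: "left_haar lam"
  obtains A where "A \<in> sets borel" "0 < emeasure lam A" "emeasure lam A < \<infinity>"
proof -
  have "\<exists>U K. openin euclidean U \<and> compactin euclidean K \<and> (0::'g) \<in> U \<and> U \<subseteq> K"
    using lc unfolding locally_compact_space_def by simp
  then obtain U K where UK: "openin euclidean U" "compactin euclidean K" "(0::'g) \<in> U" "U \<subseteq> K"
    by blast
  have "open U" "compact K"
    using UK(1,2) by (metis open_openin, metis compactin_euclidean_iff)
  then have K: "K \<in> sets borel"
    by (simp add: borel_closed compact_imp_closed)
  have "0 < emeasure lam U"
    using haar \<open>open U\<close> UK(3) unfolding left_haar_def by blast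
  also have "\<dots> \<le> emeasure lam K"
    using haar K UK(4) unfolding left_haar_def by (intro emeasure_mono) simp_all
  finally have "0 < emeasure lam K" .
  moreover have "emeasure lam K < \<infinity>"
    using haar \<open>compact K\<close> unfolding left_haar_def by blast
  ultimately show ?thesis
    using that K by blast
qed

lemma left_haar_sigma_finite:
  fixes lam :: "'g::{topological_group_add, second_countable_topology, t2_space} measure"
  assumes lc: "locally_compact_space (euclidean :: 'g topology)" and haar: "left_haar lam"
  shows "sigma_finite_measure lam"
proof -
  obtain K :: "nat \<Rightarrow> 'g set" where K: "\<And>n. compact (K n)" "UNIV = (\<Union>n. K n)"
    using locally_compact_open_Union_compact[OF lc open_UNIV] by blast
  have sets_lam: "sets lam = sets borel"
    using haar by (simp add: left_haar_def)
  show ?thesis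
    unfolding sigma_finite_measure_def
  proof (intro exI[of _ "range K"] conjI)
    show "range K \<subseteq> sets lam"
      using K(1) by (auto simp: sets_lam borel_closed compact_imp_closed)
    show "\<Union> (range K) = space lam"
      using K(2) sets_eq_imp_space_eq[OF sets_lam] by simp
    show "\<forall>a\<in>range K. emeasure lam a \<noteq> \<infinity>"
      using haar K(1) by (auto simp: left_haar_def less_top)
  qed simp
qed

lemma modular_function_add:
  fixes lam :: "'g::{topological_group_add, second_countable_topology, t2_space} measure"
  assumes lc: "locally_compact_space (euclidean :: 'g topology)" and haar: "left_haar lam"
    and modular: "modular_function lam D"
  shows "D (a + b) = D a * D b"
proof -
  obtain A where A: "A \<in> sets borel" "0 < emeasure lam A" "emeasure lam A < \<infinity>"
    using left_haar_obtain_positive_finite[OF lc haar] by blast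
  have D_nonneg: "0 \<le> D g" for g
    using modular by (simp add: modular_function_def less_imp_le)
  have scale: "emeasure lam ((\<lambda>x. x + g) ` B) = ennreal (D g) * emeasure lam B"
    if "B \<in> sets borel" for g B
    using modular that by (simp add: modular_function_def)
  have "ennreal (D (a + b)) * emeasure lam A = emeasure lam ((\<lambda>x. x + (a + b)) ` A)"
    by (simp add: scale A(1))
  also have "\<dots> = emeasure lam ((\<lambda>x. x + b) ` (\<lambda>x. x + a) ` A)"
    by (simp add: image_image add.assoc)
  also have "\<dots> = ennreal (D a * D b) * emeasure lam A"
    using D_nonneg by (simp add: scale A(1) sets_borel_image_add_right ennreal_mult ac_simps)
  finally have "emeasure lam A * ennreal (D (a + b)) = emeasure lam A * ennreal (D a * D b)"
    by (simp add: ac_simps)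
  then have "ennreal (D (a + b)) = ennreal (D a * D b)"
    using A by (auto simp: ennreal_mult_cancel_left)
  then show ?thesis
    using D_nonneg by simp
qed

lemma modular_function_borel_measurable:
  fixes lam :: "'g::{topological_group_add, second_countable_topology, t2_space} measure"
  assumes lc: "locally_compact_space (euclidean :: 'g topology)" and haar: "left_haar lam"
    and modular: "modular_function lam D"
  shows "D \<in> borel_measurable borel"
proof -
  obtain A where A: "A \<in> sets borel" "0 < emeasure lam A" "emeasure lam A < \<infinity>"
    using left_haar_obtain_positive_finite[OF lc haar] by blast
  have sets_lam: "sets lam = sets borel"
    using haar by (simp add: left_haar_def)
  (* D g = lam (A g) / lam A, and g |-> lam (A g) is measurable by Tonelli's theorem. *)
  define Q where "Q = (\<lambda>p::'g \<times> 'g. snd p + - fst p) -` A"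
  have "Q \<in> sets (borel :: ('g \<times> 'g) measure)"
    unfolding Q_def
    by (rule measurable_sets_borel[OF _ A(1)]) (simp add: borel_measurable_continuous_onI continuous_intros)
  moreover have "sets ((borel :: 'g measure) \<Otimes>\<^sub>M lam) = sets (borel \<Otimes>\<^sub>M (borel :: 'g measure))"
    by (rule sets_pair_measure_cong[OF refl sets_lam])
  ultimately have "Q \<in> sets (borel \<Otimes>\<^sub>M lam)"
    by (simp only: borel_prod)
  then have "(\<lambda>g. emeasure lam (Pair g -` Q)) \<in> borel_measurable borel"
    by (rule sigma_finite_measure.measurable_emeasure_Pair[OF left_haar_sigma_finite[OF lc haar]])
  moreover have "Pair g -` Q = (\<lambda>x. x + g) ` A" for g
    unfolding Q_def image_add_right_eq_vimage by auto
  ultimately have "(\<lambda>g. emeasure lam ((\<lambda>x. x + g) ` A)) \<in> borel_measurable borel"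
    by simp
  then have "(\<lambda>g. enn2real (emeasure lam ((\<lambda>x. x + g) ` A)) / enn2real (emeasure lam A))
      \<in> borel_measurable borel"
    by (intro borel_measurable_divide borel_measurable_enn2real measurable_const) simp_all
  moreover have "D = (\<lambda>g. enn2real (emeasure lam ((\<lambda>x. x + g) ` A)) / enn2real (emeasure lam A))"
    using modular A by (intro ext) (auto simp: modular_function_def enn2real_mult less_top[symmetric] enn2real_eq_0_iff
        less_imp_le)
  ultimately show ?thesis
    by simp
qed

section \<open>Orbits and their representatives\<close>

context
  fixes act :: "'g::{topological_group_add, second_countable_topology, t2_space} \<Rightarrow> 's \<Rightarrow> 's"
    and M :: "'s measure"
  assumes action: "measurable_action act M"
begin

lemma measurable_action_swap: "(\<lambda>x. act (snd x) (fst x)) \<in> M \<Otimes>\<^sub>M (borel :: 'g measure) \<rightarrow>\<^sub>M M"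
proof -
  have "(\<lambda>x. (snd x, fst x)) \<in> M \<Otimes>\<^sub>M (borel :: 'g measure) \<rightarrow>\<^sub>M borel \<Otimes>\<^sub>M M"
    by (intro measurable_Pair measurable_snd measurable_fst)
  moreover have "(\<lambda>(g, s). act g s) \<in> borel \<Otimes>\<^sub>M M \<rightarrow>\<^sub>M M"
    using action by (simp add: measurable_action_def)
  ultimately show ?thesis
    using measurable_compose by fastforce
qed

lemma measurable_action_in_space: "s \<in> space M \<Longrightarrow> act g s \<in> space M"
  using measurable_space[OF measurable_action_swap, of "(s, g)"] by (simp add: space_pair_measure)

lemma orbit_univ_sets:
  assumes lc: "locally_compact_space (euclidean :: 'g topology)"
    and borel_space: "borel_space M" and s: "s \<in> space M"
  shows "orbit act s \<in> univ_sets M"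
proof -
  obtain f :: "'s \<Rightarrow> real" and B where "bij_betw f (space M) B" "f \<in> M \<rightarrow>\<^sub>M restrict_space borel B"
    using borel_space unfolding borel_space_def by blast
  then have f_inj: "inj_on f (space M)" and f_meas: "f \<in> borel_measurable M"
    by (simp_all add: bij_betw_imp_inj_on measurable_restrict_space2_iff)
  (* Through the Borel isomorphism f the orbit is the projection of a measurable set. *)
  have "(\<lambda>x. (s, snd x)) \<in> M \<Otimes>\<^sub>M (borel :: 'g measure) \<rightarrow>\<^sub>M M \<Otimes>\<^sub>M borel"
    using s by (intro measurable_Pair measurable_snd measurable_const)
  from measurable_compose[OF this measurable_action_swap]
  have "(\<lambda>x. act (snd x) s) \<in> M \<Otimes>\<^sub>M (borel :: 'g measure) \<rightarrow>\<^sub>M M"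
    by simp
  then have "{x \<in> space (M \<Otimes>\<^sub>M borel). f (act (snd x) s) = f (fst x)} \<in> sets (M \<Otimes>\<^sub>M (borel :: 'g measure))"
    using f_meas by (intro measurable_equality_set) (auto intro: measurable_compose)
  then have "{t \<in> space M. \<exists>g. f (act g s) = f t} \<in> univ_sets M"
    by (rule univ_sets_Collect_ex[OF lc])
  moreover have "{t \<in> space M. \<exists>g. f (act g s) = f t} = orbit act s"
    using f_inj measurable_action_in_space[OF s]
    by (auto simp: orbit_def dest: inj_onD)
  ultimately show ?thesis
    by simp
qed

context
  fixes Or :: "'s set"
  assumes reps: "orbit_representatives M act Or"
begin

lemma rep_in_reps:
  assumes "s \<in> space M"
  shows "rep act Or s \<in> Or \<and> rep act Or s \<in> orbit act s"
proof -
  have "\<exists>!r. r \<in> Or \<and> r \<in> orbit act s"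
    using reps assms by (simp add: orbit_representatives_def)
  then show ?thesis
    unfolding rep_def by (rule theI')
qed

lemma rep_eq_act:
  assumes s: "s \<in> space M" and g: "act g s \<in> Or"
  shows "rep act Or s = act g s"
proof -
  have "\<exists>!r. r \<in> Or \<and> r \<in> orbit act s"
    using reps s by (simp add: orbit_representatives_def)
  moreover have "act g s \<in> orbit act s"
    by (simp add: orbit_def)
  ultimately show ?thesis
    using rep_in_reps[OF s] g by blast
qed

lemma univ_measurable_via_transport_to_reps:
  fixes \<psi> :: "'s \<times> 'g \<Rightarrow> 'b"
  assumes lc: "locally_compact_space (euclidean :: 'g topology)"
    and Or: "Or \<in> sets M" and \<psi>: "\<psi> \<in> M \<Otimes>\<^sub>M borel \<rightarrow>\<^sub>M N"
    and f: "\<And>s g. s \<in> space M \<Longrightarrow> act g s \<in> Or \<Longrightarrow> f s = \<psi> (s, g)"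
  shows "univ_measurable M N f"
  unfolding univ_measurable_def
proof (intro conjI ballI)
  have transport: "\<exists>g. act g s \<in> Or" if "s \<in> space M" for s
    using rep_in_reps[OF that] by (auto simp: orbit_def)
  show "f \<in> space M \<rightarrow> space N"
  proof
    fix s assume s: "s \<in> space M"
    then obtain g where "act g s \<in> Or"
      using transport by blast
    then show "f s \<in> space N"
      using f[OF s] measurable_space[OF \<psi>, of "(s, g)"] s by (simp add: space_pair_measure)
  qed
  fix A assume A: "A \<in> sets N"
  have "{x \<in> space (M \<Otimes>\<^sub>M borel). act (snd x) (fst x) \<in> Or \<and> \<psi> (fst x, snd x) \<in> A}
      = ((\<lambda>x. act (snd x) (fst x)) -` Or \<inter> space (M \<Otimes>\<^sub>M borel)) \<inter> (\<psi> -` A \<inter> space (M \<Otimes>\<^sub>M borel))"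
    by auto
  also have "\<dots> \<in> sets (M \<Otimes>\<^sub>M (borel :: 'g measure))"
    using measurable_sets[OF measurable_action_swap Or] measurable_sets[OF \<psi> A] by (rule sets.Int)
  finally have "{s \<in> space M. \<exists>g. act g s \<in> Or \<and> \<psi> (s, g) \<in> A} \<in> univ_sets M"
    by (rule univ_sets_Collect_ex[OF lc])
  moreover have "f -` A \<inter> space M = {s \<in> space M. \<exists>g. act g s \<in> Or \<and> \<psi> (s, g) \<in> A}"
  proof (intro set_eqI iffI)
    fix s assume s: "s \<in> f -` A \<inter> space M"
    then obtain g where "act g s \<in> Or"
      using transport by blast
    with s show "s \<in> {s \<in> space M. \<exists>g. act g s \<in> Or \<and> \<psi> (s, g) \<in> A}"
      using f by auto
  qed (use f in auto)
  ultimately show "f -` A \<inter> space M \<in> univ_sets M"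
    by simp
qed

lemma univ_measurable_rep:
  assumes "locally_compact_space (euclidean :: 'g topology)" and "Or \<in> sets M"
  shows "univ_measurable M M (rep act Or)"
  using assms measurable_action_swap rep_eq_act
  by (intro univ_measurable_via_transport_to_reps[where \<psi> = "\<lambda>x. act (snd x) (fst x)"]) simp_all

lemma univ_measurable_kernel_rep:
  fixes \<kappa> :: "'s \<Rightarrow> 's \<Rightarrow> 'g measure"
  assumes "locally_compact_space (euclidean :: 'g topology)" and "Or \<in> sets M"
    and "(\<lambda>(r, s). emeasure (\<kappa> r s) B) \<in> borel_measurable (M \<Otimes>\<^sub>M M)"
  shows "univ_measurable M borel (\<lambda>s. emeasure (\<kappa> (rep act Or s) s) B)"
proof (rule univ_measurable_via_transport_to_reps[where \<psi> = "\<lambda>x. emeasure (\<kappa> (act (snd x) (fst x)) (fst x)) B"])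
  have "(\<lambda>x. (act (snd x) (fst x), fst x)) \<in> M \<Otimes>\<^sub>M (borel :: 'g measure) \<rightarrow>\<^sub>M M \<Otimes>\<^sub>M M"
    by (intro measurable_Pair measurable_action_swap measurable_fst)
  from measurable_compose[OF this assms(3)]
  show "(\<lambda>x. emeasure (\<kappa> (act (snd x) (fst x)) (fst x)) B) \<in> borel_measurable (M \<Otimes>\<^sub>M borel)"
    by simp
qed (use assms rep_eq_act in simp_all)

lemma Delta_star_eq:
  fixes D :: "'g \<Rightarrow> real"
  assumes s: "s \<in> space M" and g: "act g s \<in> Or"
    and D_pos: "\<And>g. D g > 0" and D_add: "\<And>a b. D (a + b) = D a * D b"
    and stabilizer: "\<And>h. act h s = s \<Longrightarrow> D h = 1"
  shows "Delta_star D act Or s = D g"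
proof -
  have act_0: "act 0 s = s" and act_add: "\<And>a b. act (a + b) s = act a (act b s)"
    using action s by (simp_all add: measurable_action_def)
  have rep: "rep act Or s = act g s"
    by (rule rep_eq_act[OF s g])
  (* Whichever g' the SOME in Delta_star picks, g' + g stabilises s. *)
  have "\<exists>g'. act g' (rep act Or s) = s"
    using act_add[of "- g" g] act_0 rep by (auto intro!: exI[of _ "- g"])
  then have g': "act (SOME g'. act g' (rep act Or s) = s) (rep act Or s) = s" (is "act ?g' _ = s")
    by (rule someI_ex)
  have D_0: "D 0 = 1"
    using D_add[of 0 0] D_pos[of 0] by simp
  have "D ?g' * D g = 1"
    using stabilizer[of "?g' + g"] act_add[of ?g' g] g' rep by (simp add: D_add)
  moreover have "D (- ?g') * D ?g' = 1"
    using D_add[of "- ?g'" ?g'] D_0 by simp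
  ultimately have "D (- ?g') = D g"
    using D_pos[of ?g'] by (metis mult.commute mult_left_cancel less_irrefl)
  then show ?thesis
    unfolding Delta_star_def by simp
qed

lemma univ_measurable_Delta_star:
  fixes D :: "'g \<Rightarrow> real"
  assumes "locally_compact_space (euclidean :: 'g topology)" and "Or \<in> sets M"
    and "D \<in> borel_measurable borel" "\<And>g. D g > 0" "\<And>a b. D (a + b) = D a * D b"
    and "\<And>s h. s \<in> space M \<Longrightarrow> act h s = s \<Longrightarrow> D h = 1"
  shows "univ_measurable M borel (Delta_star D act Or)"
  using assms Delta_star_eq
  by (intro univ_measurable_via_transport_to_reps[where \<psi> = "\<lambda>x. D (snd x)"]) (simp_all add: measurable_snd'')

end

end

theorem lemma2p9:
  fixes lam :: "'g::{topological_group_add, second_countable_topology, t2_space} measure"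
    and D :: "'g \<Rightarrow> real"
    and M :: "'s measure"
    and act :: "'g \<Rightarrow> 's \<Rightarrow> 's"
    and \<kappa> :: "'s \<Rightarrow> 's \<Rightarrow> 'g measure"
    and Or :: "'s set"
  assumes G: "lcsc_group TYPE('g)"
    and haar: "left_haar lam"
    and modular: "modular_function lam D"
    and borelS: "borel_space M"
    and action: "measurable_action act M"
    and proper: "proper_action lam M act"
    and kernel_sets: "\<And>s t. s \<in> space M \<Longrightarrow> t \<in> space M \<Longrightarrow> sets (\<kappa> s t) = sets borel"
    and kernel_meas: "\<And>B. B \<in> sets borel \<Longrightarrow>
          (\<lambda>(s, t). emeasure (\<kappa> s t) B) \<in> borel_measurable (M \<Otimes>\<^sub>M M)"
    and disint: "\<And>s f. s \<in> space M \<Longrightarrow> f \<in> borel_measurable (M \<Otimes>\<^sub>M borel) \<Longrightarrow>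
          (\<integral>\<^sup>+ g. f (act g s, g) \<partial>lam)
            = (\<integral>\<^sup>+ t. (\<integral>\<^sup>+ g. f (t, g) \<partial>(\<kappa> s t)) \<partial>(orbit_measure lam M act s))"
    and equivariant: "\<And>s t h. s \<in> space M \<Longrightarrow> t \<in> space M \<Longrightarrow>
          \<kappa> s (act h t) = distr (\<kappa> s t) borel (\<lambda>g. h + g)"
    and concentrated: "\<And>s t. s \<in> space M \<Longrightarrow> t \<in> orbit act s \<Longrightarrow>
          prob_space (\<kappa> s t) \<and> (AE g in \<kappa> s t. act g s = t)"
    and reps: "orbit_representatives M act Or"
  shows "(\<forall>s\<in>space M. orbit act s \<in> univ_sets M)
    \<and> (Or \<in> sets M \<longrightarrow> univ_measurable M M (rep act Or))
    \<and> (Or \<in> sets M \<longrightarrow> (\<forall>B\<in>sets (borel :: 'g measure).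
          univ_measurable M (borel :: ennreal measure) (\<lambda>s. emeasure (\<kappa> (rep act Or s) s) B)))
    \<and> (Or \<in> sets M \<longrightarrow> univ_measurable M (borel :: real measure) (Delta_star D act Or))"
proof -
  have lc: "locally_compact_space (euclidean :: 'g topology)"
    using G by (simp add: lcsc_group_def)
  have D_meas: "D \<in> borel_measurable borel"
    by (rule modular_function_borel_measurable[OF lc haar modular])
  have D_pos: "\<And>g. D g > 0"
    using modular by (simp add: modular_function_def)
  have D_add: "\<And>a b. D (a + b) = D a * D b"
    by (rule modular_function_add[OF lc haar modular])
  have stabilizer: "D h = 1" if s: "s \<in> space M" and h: "act h s = s" for s h
  proof (rule multiplicative_eq_1_if_translation_invariant[OF _ kernel_sets[OF s s] _ D_meas D_pos D_add])
    have "act 0 s = s"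
      using action s by (simp add: measurable_action_def)
    then have "s \<in> orbit act s"
      unfolding orbit_def by (metis rangeI)
    then show "prob_space (\<kappa> s s)"
      using concentrated[OF s] by blast
    show "distr (\<kappa> s s) borel (\<lambda>g. h + g) = \<kappa> s s"
      using equivariant[OF s s, of h] h by simp
  qed
  show ?thesis
    using orbit_univ_sets[OF action lc borelS] univ_measurable_rep[OF action reps lc]
      univ_measurable_kernel_rep[OF action reps lc _ kernel_meas]
      univ_measurable_Delta_star[OF action reps lc _ D_meas D_pos D_add stabilizer]
    by simp
qed

end
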